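(* Let $B$ be a Boolean algebra, $W\subset B^n$ a Boolean domain, $A,A'\subset W$ finite subsets and $f:A\to A'$ a bijection. Then $f$ is the restriction of a Boolean isomorphism $W\to W$ if and only if $d(f(x),f(y))=d(x,y)$ for all $x,y\in A$, where $d(x,y)=\bigvee_{i=1}^n(x_i\triangle y_i)$.
   Context: A Boolean function $f:B^n\to B$ is a function given by a polynomial expression in the variables, elements of $B$ and the Boolean operations. A Boolean domain is the zero set in $B^n$ of a Boolean function. A Boolean transformation between Boolean domains $U\subset B^n$, $V\subset B^m$ is a map $U\to V$ given coordinatewise by Boolean functions $B^n\to B$; a Boolean isomorphism is a bijective Boolean transformation. $\triangle$ denotes symmetric difference in $B$. *)

theory Defs
  imports Main
begin

datatype ('n, 'a) bexp =
    BVar 'n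
  | BConst 'a
  | BJoin "('n, 'a) bexp" "('n, 'a) bexp"
  | BMeet "('n, 'a) bexp" "('n, 'a) bexp"
  | BCompl "('n, 'a) bexp"

primrec beval :: "('n \<Rightarrow> 'a::boolean_algebra) \<Rightarrow> ('n, 'a) bexp \<Rightarrow> 'a" where
  "beval x (BVar i) = x i"
| "beval x (BConst c) = c"
| "beval x (BJoin e1 e2) = sup (beval x e1) (beval x e2)"
| "beval x (BMeet e1 e2) = inf (beval x e1) (beval x e2)"
| "beval x (BCompl e) = - beval x e"

definition boolean_function :: "((('n::finite) \<Rightarrow> 'a::boolean_algebra) \<Rightarrow> 'a) \<Rightarrow> bool" where
  "boolean_function g \<longleftrightarrow> (\<exists>e. \<forall>x. g x = beval x e)"

definition boolean_domain :: "(('n::finite) \<Rightarrow> 'a::boolean_algebra) set \<Rightarrow> bool" where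
  "boolean_domain W \<longleftrightarrow> (\<exists>g. boolean_function g \<and> W = {x. g x = bot})"

definition boolean_transformation ::
  "(('n::finite) \<Rightarrow> 'a::boolean_algebra) set \<Rightarrow> (('m::finite) \<Rightarrow> 'a) set
   \<Rightarrow> (('n \<Rightarrow> 'a) \<Rightarrow> ('m \<Rightarrow> 'a)) \<Rightarrow> bool" where
  "boolean_transformation U V F \<longleftrightarrow>
     (\<exists>gs. (\<forall>j. boolean_function (gs j)) \<and> (\<forall>x\<in>U. \<forall>j. F x j = gs j x)) \<and> F ` U \<subseteq> V"

definition boolean_isomorphism ::
  "(('n::finite) \<Rightarrow> 'a::boolean_algebra) set \<Rightarrow> (('m::finite) \<Rightarrow> 'a) set
   \<Rightarrow> (('n \<Rightarrow> 'a) \<Rightarrow> ('m \<Rightarrow> 'a)) \<Rightarrow> bool" where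
  "boolean_isomorphism U V F \<longleftrightarrow> boolean_transformation U V F \<and> bij_betw F U V"

definition symdiff :: "'a::boolean_algebra \<Rightarrow> 'a \<Rightarrow> 'a" where
  "symdiff a b = sup (inf a (- b)) (inf (- a) b)"

definition bdist :: "(('n::finite) \<Rightarrow> 'a::boolean_algebra) \<Rightarrow> ('n \<Rightarrow> 'a) \<Rightarrow> 'a" where
  "bdist x y = Sup_fin (range (\<lambda>i. symdiff (x i) (y i)))"

end

theory Submission
  imports Defs
begin

text \<open>
  Everything rests on locality: if two points agree coordinatewise below some c, then so do
  their values under any Boolean function (beval_local).  Necessity follows directly: a
  Boolean automorphism F cannot increase the distance d, and gluing x (below d(Fx,Fy)) with
  y (elsewhere) gives a point of W with the same image as x, so injectivity forces equality
  (boolean_isomorphism_preserves_bdist).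

  For sufficiency we pass to the finite subalgebra generated by the coordinates of the
  points of A and f(A) and the values of the defining function g at the 0/1 corners.  On
  each of its cells p every such point is constant, described by a truth pattern; d is
  preserved iff patterns of points of A coincide on a cell exactly when those of their
  images do.  Hence on each cell the map of patterns extends to a permutation of all
  patterns preserving the admissible ones (those of corners of W on p).  Gluing the
  permutations cell by cell and minterm by minterm gives a Boolean polynomial map
  (pattern_map) which is an automorphism of W extending f
  (bdist_preserving_map_extends).
\<close>

lemma le_iff_inf_compl_eq_bot: "(x::'a::boolean_algebra) \<le> y \<longleftrightarrow> inf x (- y) = bot"
  using inf_shunt[of x "- y"] by simp

lemma eq_by_split:
  fixes a b c :: "'a::boolean_algebra"
  assumes "inf a c = inf b c" and "inf a (- c) = inf b (- c)"
  shows "a = b"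
proof -
  have split: "z = sup (inf z c) (inf z (- c))" for z :: 'a
    by (simp add: inf_sup_distrib1[symmetric])
  show ?thesis using split[of a] split[of b] assms by simp
qed

lemma symdiff_inf_eq_bot_iff:
  "inf (symdiff (a::'a::boolean_algebra) b) c = bot \<longleftrightarrow> inf a c = inf b c"
proof -
  have "inf (symdiff a b) c = bot \<longleftrightarrow> inf (inf a c) (- b) = bot \<and> inf (inf b c) (- a) = bot"
    unfolding symdiff_def inf_sup_distrib2 sup_eq_bot_iff
    by (simp add: inf_assoc inf_commute inf_left_commute)
  also have "\<dots> \<longleftrightarrow> inf a c \<le> b \<and> inf b c \<le> a"
    by (simp only: le_iff_inf_compl_eq_bot)
  also have "\<dots> \<longleftrightarrow> inf a c \<le> inf b c \<and> inf b c \<le> inf a c"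
    by (auto intro: le_infI dest: le_infE)
  also have "\<dots> \<longleftrightarrow> inf a c = inf b c"
    by (simp add: eq_iff)
  finally show ?thesis .
qed

lemma symdiff_eq_bot_imp_eq: "symdiff (a::'a::boolean_algebra) b = bot \<Longrightarrow> a = b"
  using symdiff_inf_eq_bot_iff[of a b top] by simp

lemma Sup_fin_inf_eq_bot_iff:
  assumes "finite S" and "S \<noteq> {}"
  shows "inf (Sup_fin S) (c::'a::boolean_algebra) = bot \<longleftrightarrow> (\<forall>s\<in>S. inf s c = bot)"
  using assms by (induction S rule: finite_ne_induct) (simp_all add: inf_sup_distrib2)

lemma inf_eq_restrict:
  fixes u v p q :: "'a::boolean_algebra"
  assumes "inf u p = inf v p" and "q \<le> p"
  shows "inf u q = inf v q"
proof -
  have "inf u q = inf (inf u p) q" and "inf v q = inf (inf v p) q"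
    using assms(2) by (simp_all add: inf_assoc inf.absorb2)
  then show ?thesis using assms(1) by simp
qed

lemma inf_eq_bot_mono:
  fixes u v a b :: "'a::boolean_algebra"
  assumes "u \<le> a" and "v \<le> b" and "inf a b = bot"
  shows "inf u v = bot"
  using inf_mono[OF assms(1,2)] assms(3) by (simp add: bot_unique)

lemma bdist_inf_eq_bot_iff:
  "inf (bdist x y) (c::'a::boolean_algebra) = bot \<longleftrightarrow> (\<forall>i. inf (x i) c = inf (y i) c)"
  unfolding bdist_def by (subst Sup_fin_inf_eq_bot_iff) (auto simp: symdiff_inf_eq_bot_iff)

text \<open>Locality: if x and y agree coordinatewise on c, so do their values under any Boolean
  polynomial.  This is the single property of Boolean functions the whole proof rests on.\<close>
lemma beval_local:
  fixes c :: "'a::boolean_algebra"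
  assumes "\<And>i. inf (x i) c = inf (y i) c"
  shows "inf (beval x e) c = inf (beval y e) c"
proof (induction e)
  case (BJoin e1 e2)
  then show ?case by (simp only: beval.simps inf_sup_distrib2)
next
  case (BMeet e1 e2)
  have "inf (beval x (BMeet e1 e2)) c = inf (inf (beval x e1) c) (inf (beval x e2) c)"
    by (simp add: inf_aci)
  also have "\<dots> = inf (inf (beval y e1) c) (inf (beval y e2) c)"
    using BMeet by simp
  also have "\<dots> = inf (beval y (BMeet e1 e2)) c"
    by (simp add: inf_aci)
  finally show ?case .
next
  case (BCompl e)
  have compl: "inf (- u) c = inf (- inf u c) c" for u
    by (simp add: inf_sup_distrib2)
  show ?case using BCompl compl[of "beval x e"] compl[of "beval y e"] by simp
qed (simp_all add: assms)

lemma boolean_function_local: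
  assumes "boolean_function g" and "\<And>i. inf (x i) c = inf (y i) c"
  shows "inf (g x) c = inf (g y) c"
proof -
  obtain e where "\<And>x. g x = beval x e"
    using assms(1) unfolding boolean_function_def by blast
  then show ?thesis using beval_local[OF assms(2)] by simp
qed

lemma boolean_function_var: "boolean_function (\<lambda>x. x i)"
  unfolding boolean_function_def by (rule exI[of _ "BVar i"]) simp

lemma boolean_function_const: "boolean_function (\<lambda>x. c)"
  unfolding boolean_function_def by (rule exI[of _ "BConst c"]) simp

lemma boolean_function_sup:
  "boolean_function f \<Longrightarrow> boolean_function g \<Longrightarrow> boolean_function (\<lambda>x. sup (f x) (g x))"
  unfolding boolean_function_def by (metis beval.simps(3))

lemma boolean_function_inf:
  "boolean_function f \<Longrightarrow> boolean_function g \<Longrightarrow> boolean_function (\<lambda>x. inf (f x) (g x))"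
  unfolding boolean_function_def by (metis beval.simps(4))

lemma boolean_function_compl: "boolean_function f \<Longrightarrow> boolean_function (\<lambda>x. - f x)"
  unfolding boolean_function_def by (metis beval.simps(5))

lemma boolean_transformation_local:
  assumes "boolean_transformation U V F" and "x \<in> U" and "y \<in> U"
    and "\<And>i. inf (x i) c = inf (y i) c"
  shows "inf (F x j) c = inf (F y j) c"
proof -
  obtain gs where gs: "\<And>j. boolean_function (gs j)" and F: "\<And>x j. x \<in> U \<Longrightarrow> F x j = gs j x"
    using assms(1) unfolding boolean_transformation_def by (elim exE conjE) blast
  have "inf (gs j x) c = inf (gs j y) c"
    by (rule boolean_function_local[OF gs assms(4)])
  then show ?thesis by (simp only: F[OF assms(2)] F[OF assms(3)])
qed

definition glue :: "'a::boolean_algebra \<Rightarrow> ('n \<Rightarrow> 'a) \<Rightarrow> ('n \<Rightarrow> 'a) \<Rightarrow> 'n \<Rightarrow> 'a" where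
  "glue b x y = (\<lambda>i. sup (inf (x i) b) (inf (y i) (- b)))"

lemma glue_inf: "inf (glue b x y i) b = inf (x i) b"
  and glue_inf_compl: "inf (glue b x y i) (- b) = inf (y i) (- b)"
  unfolding glue_def by (simp_all add: inf_sup_distrib2 inf_assoc)

lemma zero_set_glue:
  assumes "boolean_function g" and "g x = bot" and "g y = bot"
  shows "g (glue b x y) = bot"
proof (rule eq_by_split)
  have "inf (g (glue b x y)) b = inf (g x) b"
    by (rule boolean_function_local[OF assms(1) glue_inf])
  then show "inf (g (glue b x y)) b = inf bot b" using assms(2) by simp
  have "inf (g (glue b x y)) (- b) = inf (g y) (- b)"
    by (rule boolean_function_local[OF assms(1) glue_inf_compl])
  then show "inf (g (glue b x y)) (- b) = inf bot (- b)" using assms(3) by simp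
qed

text \<open>By locality d(Fx,Fy) \<le> d(x,y); conversely the point glued from x on b = d(Fx,Fy) and
  from y off b lies in W and has the same image as x, so it is x, whence d(x,y) \<le> b.\<close>
lemma boolean_isomorphism_preserves_bdist:
  assumes W: "boolean_domain W" and F: "boolean_isomorphism W W F"
    and x: "x \<in> W" and y: "y \<in> W"
  shows "bdist (F x) (F y) = bdist x y"
proof -
  obtain g where g: "boolean_function g" and W_eq: "W = {x. g x = bot}"
    using W unfolding boolean_domain_def by blast
  have trans: "boolean_transformation W W F" and inj: "inj_on F W"
    using F unfolding boolean_isomorphism_def bij_betw_def by simp_all
  note F_local = boolean_transformation_local[OF trans]
  define a where "a = bdist x y"
  define b where "b = bdist (F x) (F y)"
  have "b \<le> a"
  proof -
    have "inf (x i) (- a) = inf (y i) (- a)" for i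
      using bdist_inf_eq_bot_iff[of x y "- a"] unfolding a_def by simp
    then have "inf (F x j) (- a) = inf (F y j) (- a)" for j
      by (rule F_local[OF x y])
    then show ?thesis
      unfolding le_iff_inf_compl_eq_bot b_def by (simp add: bdist_inf_eq_bot_iff)
  qed
  moreover have "a \<le> b"
  proof -
    define z where "z = glue b x y"
    have z: "z \<in> W"
      using zero_set_glue[OF g] x y unfolding z_def W_eq by simp
    have Fxy: "inf (F x j) (- b) = inf (F y j) (- b)" for j
      using bdist_inf_eq_bot_iff[of "F x" "F y" "- b"] unfolding b_def by simp
    have "F z = F x"
    proof
      fix j
      show "F z j = F x j"
      proof (rule eq_by_split)
        show "inf (F z j) b = inf (F x j) b"
          by (rule F_local[OF z x]) (simp add: z_def glue_inf)
        have "inf (F z j) (- b) = inf (F y j) (- b)"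
          by (rule F_local[OF z y]) (simp add: z_def glue_inf_compl)
        then show "inf (F z j) (- b) = inf (F x j) (- b)" using Fxy by simp
      qed
    qed
    then have "z = x" using inj z x by (simp add: inj_on_eq_iff)
    then have "inf (x i) (- b) = inf (y i) (- b)" for i
      using glue_inf_compl[of b x y i] unfolding z_def by simp
    then show ?thesis
      unfolding le_iff_inf_compl_eq_bot a_def by (simp add: bdist_inf_eq_bot_iff)
  qed
  ultimately show ?thesis unfolding a_def b_def by simp
qed

primrec join_list :: "'b list \<Rightarrow> ('b \<Rightarrow> 'a::boolean_algebra) \<Rightarrow> 'a" where
  "join_list [] h = bot"
| "join_list (x # xs) h = sup (h x) (join_list xs h)"

primrec meet_list :: "'b list \<Rightarrow> ('b \<Rightarrow> 'a::boolean_algebra) \<Rightarrow> 'a" where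
  "meet_list [] h = top"
| "meet_list (x # xs) h = inf (h x) (meet_list xs h)"

lemma boolean_function_join_list:
  "(\<And>y. y \<in> set xs \<Longrightarrow> boolean_function (h y)) \<Longrightarrow> boolean_function (\<lambda>z. join_list xs (\<lambda>y. h y z))"
  by (induction xs) (auto intro: boolean_function_sup boolean_function_const)

lemma boolean_function_meet_list:
  "(\<And>y. y \<in> set xs \<Longrightarrow> boolean_function (h y)) \<Longrightarrow> boolean_function (\<lambda>z. meet_list xs (\<lambda>y. h y z))"
  by (induction xs) (auto intro: boolean_function_inf boolean_function_const)

lemma join_list_inf_eq_bot:
  "(\<And>x. x \<in> set xs \<Longrightarrow> inf (h x) q = bot) \<Longrightarrow> inf (join_list xs h) q = bot"
  by (induction xs) (auto simp: inf_sup_distrib2)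

lemma join_list_inf_single:
  assumes "x0 \<in> set xs" and "\<And>x. x \<in> set xs \<Longrightarrow> x \<noteq> x0 \<Longrightarrow> inf (h x) q = bot"
  shows "inf (join_list xs h) q = inf (h x0) q"
  using assms
proof (induction xs)
  case (Cons a xs)
  show ?case
  proof (cases "x0 \<in> set xs")
    case True
    then have "inf (join_list xs h) q = inf (h x0) q" using Cons by auto
    moreover have "inf (h a) q = bot \<or> a = x0" using Cons.prems by auto
    ultimately show ?thesis by (auto simp: inf_sup_distrib2)
  next
    case False
    then have "a = x0" using Cons by auto
    moreover have "inf (join_list xs h) q = bot"
      using Cons False by (auto intro: join_list_inf_eq_bot)
    ultimately show ?thesis by (simp add: inf_sup_distrib2)
  qed
qed simp

lemma meet_list_le: "x \<in> set xs \<Longrightarrow> meet_list xs h \<le> h x"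
  by (induction xs) (auto intro: le_infI2)

lemma meet_list_cong: "(\<And>x. x \<in> set xs \<Longrightarrow> h x = h' x) \<Longrightarrow> meet_list xs h = meet_list xs h'"
  by (induction xs) auto

definition corner :: "('n \<Rightarrow> bool) \<Rightarrow> 'n \<Rightarrow> 'a::boolean_algebra" where
  "corner \<alpha> = (\<lambda>i. if \<alpha> i then top else bot)"

definition literal :: "bool \<Rightarrow> 'a \<Rightarrow> 'a::boolean_algebra" where
  "literal s u = (if s then u else - u)"

definition coords :: "'n::finite list" where
  "coords = (SOME xs. set xs = UNIV \<and> distinct xs)"

definition minterm :: "('n::finite \<Rightarrow> 'a::boolean_algebra) \<Rightarrow> ('n \<Rightarrow> bool) \<Rightarrow> 'a" where
  "minterm z \<alpha> = meet_list coords (\<lambda>i. literal (\<alpha> i) (z i))"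

lemma coords: "set (coords::'n::finite list) = UNIV" "distinct (coords::'n::finite list)"
proof -
  have "\<exists>xs. set xs = (UNIV::'n set) \<and> distinct xs"
    by (rule finite_distinct_list) simp
  then have "set (coords::'n list) = UNIV \<and> distinct (coords::'n list)"
    unfolding coords_def by (rule someI_ex)
  then show "set (coords::'n::finite list) = UNIV" "distinct (coords::'n::finite list)"
    by auto
qed

lemma minterm_le_literal: "minterm z \<alpha> \<le> literal (\<alpha> i) (z i)"
  unfolding minterm_def by (rule meet_list_le) (simp add: coords)

lemma minterm_disjoint: "\<alpha> \<noteq> \<beta> \<Longrightarrow> inf (minterm z \<alpha>) (minterm z \<beta>) = bot"
proof -
  assume "\<alpha> \<noteq> \<beta>"
  then obtain i where i: "\<alpha> i \<noteq> \<beta> i" by auto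
  have "inf (minterm z \<alpha>) (minterm z \<beta>) \<le> inf (literal (\<alpha> i) (z i)) (literal (\<beta> i) (z i))"
    by (intro inf_mono minterm_le_literal)
  also have "\<dots> = bot" using i unfolding literal_def by (cases "\<alpha> i") auto
  finally show ?thesis by (simp add: bot_unique)
qed

lemma boolean_function_literal: "boolean_function (\<lambda>z. literal s (z i))"
  by (cases s) (simp_all add: literal_def boolean_function_var boolean_function_compl)

lemma boolean_function_minterm: "boolean_function (\<lambda>z. minterm z \<alpha>)"
  unfolding minterm_def by (rule boolean_function_meet_list) (rule boolean_function_literal)

lemma le_minterm_iff:
  fixes z :: "'n::finite \<Rightarrow> 'a::boolean_algebra"
  shows "q \<le> minterm z \<alpha> \<longleftrightarrow> (\<forall>i. inf (z i) q = inf (corner \<alpha> i) q)"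
proof
  assume q: "q \<le> minterm z \<alpha>"
  show "\<forall>i. inf (z i) q = inf (corner \<alpha> i) q"
  proof
    fix i
    have "q \<le> literal (\<alpha> i) (z i)" using q minterm_le_literal order_trans by blast
    then show "inf (z i) q = inf (corner \<alpha> i) q"
      unfolding literal_def corner_def
      by (cases "\<alpha> i") (auto simp: inf.absorb1 inf_commute inf_shunt)
  qed
next
  assume "\<forall>i. inf (z i) q = inf (corner \<alpha> i) q"
  then have "inf (minterm z \<alpha>) q = inf (minterm (corner \<alpha>) \<alpha>) q"
    using boolean_function_local[OF boolean_function_minterm] by blast
  moreover have "minterm (corner \<alpha>) \<alpha> = (top :: 'a)"
  proof -
    have "meet_list xs (\<lambda>i. literal (\<alpha> i) (corner \<alpha> i)) = (top :: 'a)" for xs :: "'n list"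
      by (induction xs) (simp_all add: literal_def corner_def)
    then show ?thesis unfolding minterm_def .
  qed
  ultimately show "q \<le> minterm z \<alpha>" by (simp add: inf.absorb_iff2 inf_commute)
qed

lemma minterms_cover_list:
  fixes x :: "'a::boolean_algebra"
  assumes "distinct is" and "\<And>\<alpha>. inf x (meet_list is (\<lambda>i. literal (\<alpha> i) (z i))) = bot"
  shows "x = bot"
  using assms
proof (induction "is")
  case (Cons i "is")
  show ?case
  proof (rule Cons.IH)
    show "distinct is" using Cons by simp
    fix \<alpha> :: "'b \<Rightarrow> bool"
    let ?T = "meet_list is (\<lambda>j. literal (\<alpha> j) (z j))"
    have T: "meet_list is (\<lambda>j. literal ((\<alpha>(i := s)) j) (z j)) = ?T" for s
      by (rule meet_list_cong) (use Cons.prems(1) in auto)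
    have "inf x (inf (literal s (z i)) ?T) = bot" for s
      using Cons.prems(2)[of "\<alpha>(i := s)"] T by simp
    note halves = this[of True] this[of False]
    show "inf x ?T = bot"
      by (rule eq_by_split[where c = "z i"]) (use halves in \<open>simp_all add: literal_def inf_aci\<close>)
  qed
qed simp

lemma minterms_cover: "(\<And>\<alpha>. inf x (minterm z \<alpha>) = bot) \<Longrightarrow> x = bot"
  unfolding minterm_def by (rule minterms_cover_list[OF coords(2)])

text \<open>The cells of the finite subalgebra generated by cs: all meets of the c \<in> cs or
  their complements (some of them may be bot).\<close>
primrec cells :: "'a::boolean_algebra list \<Rightarrow> 'a set" where
  "cells [] = {top}"
| "cells (c # cs) = (\<lambda>p. inf p c) ` cells cs \<union> (\<lambda>p. inf p (- c)) ` cells cs"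

lemma cells_finite: "finite (cells cs)"
  by (induction cs) auto

lemma cells_disjoint: "p \<in> cells cs \<Longrightarrow> q \<in> cells cs \<Longrightarrow> p \<noteq> q \<Longrightarrow> inf p q = bot"
proof (induction cs arbitrary: p q)
  case (Cons c cs)
  obtain p' where p': "p' \<in> cells cs" "p = inf p' c \<or> p = inf p' (- c)"
    using Cons.prems(1) by auto
  obtain q' where q': "q' \<in> cells cs" "q = inf q' c \<or> q = inf q' (- c)"
    using Cons.prems(2) by auto
  show ?case
  proof (cases "p' = q'")
    case True
    have "inf (inf p' c) (inf p' (- c)) = bot" by (simp add: inf_aci)
    then show ?thesis using True p' q' Cons.prems(3) by (auto simp: inf_commute)
  next
    case False
    have "p \<le> p'" and "q \<le> q'" using p' q' by auto
    then have "inf p q \<le> inf p' q'" by (rule inf_mono)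
    moreover have "inf p' q' = bot" using False Cons.IH p' q' by blast
    ultimately show ?thesis by (simp add: bot_unique)
  qed
qed simp

lemma cells_cover: "(\<And>p. p \<in> cells cs \<Longrightarrow> inf x p = bot) \<Longrightarrow> x = bot"
proof (induction cs)
  case (Cons c cs)
  show ?case
  proof (rule Cons.IH)
    fix p assume p: "p \<in> cells cs"
    have "inf (inf x p) c = inf bot c" and "inf (inf x p) (- c) = inf bot (- c)"
      using Cons.prems p by (auto simp: inf_assoc)
    then show "inf x p = bot" by (rule eq_by_split)
  qed
qed simp

lemma cell_below_or_disjoint:
  "c \<in> set cs \<Longrightarrow> p \<in> cells cs \<Longrightarrow> inf p c = p \<or> inf p c = bot"
proof (induction cs arbitrary: p)
  case (Cons c' cs)
  obtain p' where p': "p' \<in> cells cs" "p = inf p' c' \<or> p = inf p' (- c')"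
    using Cons.prems(2) by auto
  show ?case
  proof (cases "c = c'")
    case True
    then show ?thesis using p' by (auto simp: inf_assoc)
  next
    case False
    then have "inf p' c = p' \<or> inf p' c = bot" using Cons p' by auto
    moreover have "inf (inf p' d) c = inf (inf p' c) d" for d by (simp add: inf_aci)
    ultimately show ?thesis using p' by auto
  qed
qed simp

definition pattern :: "'a::boolean_algebra \<Rightarrow> ('n \<Rightarrow> 'a) \<Rightarrow> 'n \<Rightarrow> bool" where
  "pattern p x = (\<lambda>i. inf (x i) p \<noteq> bot)"

lemma cell_pattern:
  assumes "\<And>i. x i \<in> set cs" and "p \<in> cells cs"
  shows "inf (x i) p = inf (corner (pattern p x) i) p"
proof -
  have "inf p (x i) = p \<or> inf p (x i) = bot" using cell_below_or_disjoint assms by blast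
  then show ?thesis unfolding pattern_def corner_def by (auto simp: inf_commute)
qed

lemma pattern_eq_iff:
  assumes "\<And>i. x i \<in> set cs" and "\<And>i. y i \<in> set cs" and "p \<in> cells cs"
  shows "pattern p x = pattern p y \<longleftrightarrow> (\<forall>i. inf (x i) p = inf (y i) p)"
proof
  assume "pattern p x = pattern p y"
  then show "\<forall>i. inf (x i) p = inf (y i) p"
    using cell_pattern[of x cs p] cell_pattern[of y cs p] assms by simp
qed (simp add: pattern_def)

lemma eq_on_cells_minterms:
  assumes "\<And>p \<alpha>. p \<in> cells cs \<Longrightarrow> inf u (inf p (minterm z \<alpha>)) = inf v (inf p (minterm z \<alpha>))"
  shows "u = (v::'a::boolean_algebra)"
proof -
  have "symdiff u v = bot"
  proof (rule cells_cover)
    fix p assume p: "p \<in> cells cs"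
    show "inf (symdiff u v) p = bot"
    proof (rule minterms_cover)
      fix \<alpha>
      show "inf (inf (symdiff u v) p) (minterm z \<alpha>) = bot"
        using assms[OF p] by (simp add: symdiff_inf_eq_bot_iff inf_assoc)
    qed
  qed
  then show ?thesis by (rule symdiff_eq_bot_imp_eq)
qed

lemma compatible_labellings_bij:
  assumes "\<And>x y. x \<in> A \<Longrightarrow> y \<in> A \<Longrightarrow> a x = a y \<longleftrightarrow> b x = b y"
  shows "\<exists>h. bij_betw h (a ` A) (b ` A) \<and> (\<forall>x\<in>A. h (a x) = b x)"
proof -
  define h where "h s = b (inv_into A a s)" for s
  have h: "h (a x) = b x" if "x \<in> A" for x
    using assms[OF inv_into_into[of "a x" a A] that] f_inv_into_f[of "a x" a A] that
    unfolding h_def by auto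
  have "bij_betw h (a ` A) (b ` A)"
    unfolding bij_betw_def inj_on_def using h assms by (auto simp: image_image)
  then show ?thesis using h by blast
qed

lemma extend_bij_to_permutation:
  assumes D: "finite D" and S: "S \<subseteq> D" "S' \<subseteq> D" and h: "bij_betw h S S'"
  shows "\<exists>\<tau>. bij \<tau> \<and> (\<forall>\<alpha>. \<tau> \<alpha> \<in> D \<longleftrightarrow> \<alpha> \<in> D) \<and> (\<forall>s\<in>S. \<tau> s = h s)"
proof -
  have "card (D - S) = card (D - S')"
    using bij_betw_same_card[OF h] S D by (simp add: card_Diff_subset finite_subset)
  then obtain k where k: "bij_betw k (D - S) (D - S')"
    using D by (meson finite_Diff finite_same_card_bij)
  define \<tau> where "\<tau> \<alpha> = (if \<alpha> \<in> S then h \<alpha> else if \<alpha> \<in> D then k \<alpha> else \<alpha>)" for \<alpha>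
  have "bij_betw \<tau> S S'"
    using h by (rule bij_betw_cong[THEN iffD1, rotated]) (simp add: \<tau>_def)
  moreover have "bij_betw \<tau> (D - S) (D - S')"
    using k by (rule bij_betw_cong[THEN iffD1, rotated]) (simp add: \<tau>_def)
  moreover have "bij_betw \<tau> (- D) (- D)"
    by (rule bij_betw_cong[THEN iffD1, rotated, OF bij_betw_id]) (use S in \<open>auto simp: \<tau>_def\<close>)
  ultimately have "bij_betw \<tau> (S \<union> (D - S) \<union> - D) (S' \<union> (D - S') \<union> - D)"
    using S by (intro bij_betw_combine) auto
  moreover have "S \<union> (D - S) \<union> - D = UNIV" and "S' \<union> (D - S') \<union> - D = UNIV"
    by auto
  ultimately have "bij \<tau>" by simp
  moreover have "\<tau> \<alpha> \<in> D \<longleftrightarrow> \<alpha> \<in> D" for \<alpha>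
    using h k S unfolding \<tau>_def bij_betw_def by auto
  moreover have "\<forall>s\<in>S. \<tau> s = h s" by (simp add: \<tau>_def)
  ultimately show ?thesis by blast
qed

definition all_patterns :: "('n::finite \<Rightarrow> bool) list" where
  "all_patterns = (SOME xs. set xs = UNIV)"

lemma all_patterns: "set (all_patterns :: ('n::finite \<Rightarrow> bool) list) = UNIV"
  unfolding all_patterns_def by (rule someI_ex) (rule finite_list, simp)

definition pattern_map ::
  "'a::boolean_algebra list \<Rightarrow> ('a \<Rightarrow> ('n::finite \<Rightarrow> bool) \<Rightarrow> ('n \<Rightarrow> bool)) \<Rightarrow> ('n \<Rightarrow> 'a) \<Rightarrow> 'n \<Rightarrow> 'a"
  where "pattern_map ps \<sigma> z = (\<lambda>j. join_list ps (\<lambda>p. join_list all_patterns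
           (\<lambda>\<alpha>. inf (inf p (minterm z \<alpha>)) (corner (\<sigma> p \<alpha>) j))))"

lemma boolean_function_pattern_map: "boolean_function (\<lambda>z. pattern_map ps \<sigma> z j)"
  unfolding pattern_map_def
  by (intro boolean_function_join_list boolean_function_inf boolean_function_const
      boolean_function_minterm)

lemma pattern_map_below:
  assumes ps: "set ps = cells cs" and p: "p \<in> cells cs" and q: "q \<le> inf p (minterm z \<alpha>)"
  shows "inf (pattern_map ps \<sigma> z j) q = inf (corner (\<sigma> p \<alpha>) j) q"
proof (rule inf_eq_restrict[OF _ q])
  let ?Q = "inf p (minterm z \<alpha>)"
  let ?term = "\<lambda>p' \<beta>. inf (inf p' (minterm z \<beta>)) (corner (\<sigma> p' \<beta>) j)"
  have "inf (pattern_map ps \<sigma> z j) ?Q = inf (join_list all_patterns (?term p)) ?Q"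
    unfolding pattern_map_def
  proof (rule join_list_inf_single)
    show "p \<in> set ps" using p ps by simp
    fix p' assume "p' \<in> set ps" and "p' \<noteq> p"
    then have disjoint: "inf p' p = bot" using cells_disjoint p ps by blast
    show "inf (join_list all_patterns (?term p')) ?Q = bot"
    proof (rule join_list_inf_eq_bot)
      fix \<beta>
      show "inf (?term p' \<beta>) ?Q = bot"
        by (rule inf_eq_bot_mono[OF _ _ disjoint]) (auto intro: le_infI1)
    qed
  qed
  also have "\<dots> = inf (?term p \<alpha>) ?Q"
  proof (rule join_list_inf_single)
    show "\<alpha> \<in> set all_patterns" by (simp add: all_patterns)
    fix \<beta> assume "\<beta> \<noteq> \<alpha>"
    then have "inf (minterm z \<beta>) (minterm z \<alpha>) = bot" by (rule minterm_disjoint)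
    then show "inf (?term p \<beta>) ?Q = bot"
      by (rule inf_eq_bot_mono[rotated 2]) (auto intro: le_infI1 le_infI2)
  qed
  also have "\<dots> = inf (corner (\<sigma> p \<alpha>) j) ?Q" by (simp add: inf_aci)
  finally show "inf (pattern_map ps \<sigma> z j) ?Q = inf (corner (\<sigma> p \<alpha>) j) ?Q" .
qed

lemma pattern_map_zero_set:
  assumes g: "boolean_function g" and ps: "set ps = cells cs"
    and gen: "\<And>\<alpha>. g (corner \<alpha>) \<in> set cs"
    and adm: "\<And>p \<alpha>. p \<in> cells cs \<Longrightarrow> inf (g (corner \<alpha>)) p = bot \<Longrightarrow> inf (g (corner (\<sigma> p \<alpha>))) p = bot"
    and z: "g z = bot"
  shows "g (pattern_map ps \<sigma> z) = bot"
proof (rule eq_on_cells_minterms[where cs = cs and z = z])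
  fix p \<alpha> assume p: "p \<in> cells cs"
  let ?Q = "inf p (minterm z \<alpha>)"
  have "inf (g (pattern_map ps \<sigma> z)) ?Q = inf (g (corner (\<sigma> p \<alpha>))) ?Q"
    by (rule boolean_function_local[OF g]) (rule pattern_map_below[OF ps p order_refl])
  also have "\<dots> = bot"
  proof (cases "inf (g (corner \<alpha>)) p = bot")
    case True
    then have "inf (g (corner (\<sigma> p \<alpha>))) p = bot" using adm p by blast
    then show ?thesis by (simp add: inf_assoc[symmetric])
  next
    case False
    then have "inf p (g (corner \<alpha>)) = p"
      using cell_below_or_disjoint[OF gen p] by (auto simp: inf_commute)
    then have "?Q \<le> g (corner \<alpha>)"
      by (intro le_infI1) (simp add: inf.absorb_iff1)
    moreover have "inf (g z) ?Q = inf (g (corner \<alpha>)) ?Q"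
      by (rule boolean_function_local[OF g]) (use le_minterm_iff[of ?Q z \<alpha>] in simp)
    ultimately have "?Q = bot" using z by (simp add: inf.absorb2)
    then show ?thesis by simp
  qed
  finally show "inf (g (pattern_map ps \<sigma> z)) ?Q = inf bot ?Q" by simp
qed

lemma pattern_map_inverse:
  assumes ps: "set ps = cells cs"
    and inv: "\<And>p \<alpha>. p \<in> cells cs \<Longrightarrow> \<sigma>' p (\<sigma> p \<alpha>) = \<alpha>"
  shows "pattern_map ps \<sigma>' (pattern_map ps \<sigma> z) = z"
proof
  fix j
  show "pattern_map ps \<sigma>' (pattern_map ps \<sigma> z) j = z j"
  proof (rule eq_on_cells_minterms[where cs = cs and z = z])
    fix p \<alpha> assume p: "p \<in> cells cs"
    let ?Q = "inf p (minterm z \<alpha>)"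
    let ?y = "pattern_map ps \<sigma> z"
    have "?Q \<le> minterm ?y (\<sigma> p \<alpha>)"
      unfolding le_minterm_iff using pattern_map_below[OF ps p order_refl] by blast
    then have "?Q \<le> inf p (minterm ?y (\<sigma> p \<alpha>))" by simp
    then have "inf (pattern_map ps \<sigma>' ?y j) ?Q = inf (corner (\<sigma>' p (\<sigma> p \<alpha>)) j) ?Q"
      by (rule pattern_map_below[OF ps p])
    also have "\<dots> = inf (z j) ?Q"
      using inv[OF p] le_minterm_iff[of ?Q z \<alpha>] by simp
    finally show "inf (pattern_map ps \<sigma>' ?y j) ?Q = inf (z j) ?Q" .
  qed
qed

lemma pattern_map_isomorphism:
  assumes g: "boolean_function g" and W: "W = {x. g x = bot}"
    and ps: "set ps = cells cs" and gen: "\<And>\<alpha>. g (corner \<alpha>) \<in> set cs"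
    and perm: "\<And>p. p \<in> cells cs \<Longrightarrow> bij (\<sigma> p)"
    and adm: "\<And>p \<alpha>. p \<in> cells cs \<Longrightarrow> inf (g (corner (\<sigma> p \<alpha>))) p = bot \<longleftrightarrow> inf (g (corner \<alpha>)) p = bot"
  shows "boolean_isomorphism W W (pattern_map ps \<sigma>)"
proof -
  define \<sigma>' where "\<sigma>' p = inv (\<sigma> p)" for p
  have inv1: "\<sigma>' p (\<sigma> p \<alpha>) = \<alpha>" and inv2: "\<sigma> p (\<sigma>' p \<alpha>) = \<alpha>" if "p \<in> cells cs" for p \<alpha>
    using perm[OF that] unfolding \<sigma>'_def by (simp_all add: bij_is_inj bij_is_surj surj_f_inv_f)
  have adm': "inf (g (corner (\<sigma>' p \<alpha>))) p = bot" if "p \<in> cells cs" "inf (g (corner \<alpha>)) p = bot" for p \<alpha>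
    using adm[OF that(1), of "\<sigma>' p \<alpha>"] inv2[OF that(1)] that(2) by simp
  have maps_W: "pattern_map ps \<sigma> ` W \<subseteq> W"
    using pattern_map_zero_set[OF g ps gen, of \<sigma>] adm unfolding W by blast
  have inv_maps_W: "pattern_map ps \<sigma>' ` W \<subseteq> W"
    using pattern_map_zero_set[OF g ps gen, of \<sigma>'] adm' unfolding W by blast
  have "bij_betw (pattern_map ps \<sigma>) W W"
    by (rule bij_betw_byWitness[OF _ _ maps_W inv_maps_W])
       (simp_all add: pattern_map_inverse[where \<sigma>' = \<sigma>' and \<sigma> = \<sigma>, OF ps inv1]
         pattern_map_inverse[where \<sigma>' = \<sigma> and \<sigma> = \<sigma>', OF ps inv2])
  moreover have "boolean_transformation W W (pattern_map ps \<sigma>)"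
    unfolding boolean_transformation_def
    by (intro conjI exI[of _ "\<lambda>j z. pattern_map ps \<sigma> z j"])
       (simp_all add: boolean_function_pattern_map maps_W)
  ultimately show ?thesis unfolding boolean_isomorphism_def by simp
qed

lemma pattern_map_at:
  assumes ps: "set ps = cells cs" and x: "\<And>i. x i \<in> set cs" and y: "\<And>i. y i \<in> set cs"
    and \<sigma>: "\<And>p. p \<in> cells cs \<Longrightarrow> \<sigma> p (pattern p x) = pattern p y"
  shows "pattern_map ps \<sigma> x = y"
proof
  fix j
  show "pattern_map ps \<sigma> x j = y j"
  proof (rule eq_on_cells_minterms[where cs = cs and z = x])
    fix p \<alpha> assume p: "p \<in> cells cs"
    let ?Q = "inf p (minterm x \<alpha>)"
    have Qp: "?Q \<le> p" by simp
    show "inf (pattern_map ps \<sigma> x j) ?Q = inf (y j) ?Q"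
    proof (cases "?Q = bot")
      case False
      have "\<alpha> = pattern p x"
      proof
        fix i
        have "inf (corner \<alpha> i) ?Q = inf (x i) ?Q"
          using le_minterm_iff[of ?Q x \<alpha>] by simp
        also have "\<dots> = inf (corner (pattern p x) i) ?Q"
          by (rule inf_eq_restrict[OF cell_pattern[OF x p] Qp])
        finally show "\<alpha> i = pattern p x i"
          using False unfolding corner_def by (auto split: if_splits)
      qed
      then have "\<sigma> p \<alpha> = pattern p y" using \<sigma>[OF p] by simp
      have "inf (pattern_map ps \<sigma> x j) ?Q = inf (corner (\<sigma> p \<alpha>) j) ?Q"
        by (rule pattern_map_below[OF ps p order_refl])
      also have "\<dots> = inf (corner (pattern p y) j) ?Q"
        using \<open>\<sigma> p \<alpha> = pattern p y\<close> by simp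
      also have "\<dots> = inf (y j) ?Q"
        by (rule inf_eq_restrict[OF cell_pattern[OF y p, symmetric] Qp])
      finally show ?thesis .
    qed simp
  qed
qed

lemma pattern_permutation_exists:
  fixes D :: "('n::finite \<Rightarrow> bool) set"
  assumes p: "p \<in> cells cs" and gen: "\<And>x i. x \<in> A \<union> f ` A \<Longrightarrow> x i \<in> set cs"
    and in_D: "\<And>x. x \<in> A \<union> f ` A \<Longrightarrow> pattern p x \<in> D"
    and iso: "\<And>x y. x \<in> A \<Longrightarrow> y \<in> A \<Longrightarrow> bdist (f x) (f y) = bdist x y"
  shows "\<exists>\<tau>. bij \<tau> \<and> (\<forall>\<alpha>. \<tau> \<alpha> \<in> D \<longleftrightarrow> \<alpha> \<in> D) \<and> (\<forall>x\<in>A. \<tau> (pattern p x) = pattern p (f x))"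
proof -
  have "pattern p x = pattern p y \<longleftrightarrow> pattern p (f x) = pattern p (f y)"
    if xy: "x \<in> A" "y \<in> A" for x y
  proof -
    have "pattern p x = pattern p y \<longleftrightarrow> (\<forall>i. inf (x i) p = inf (y i) p)"
      by (rule pattern_eq_iff[OF _ _ p]) (use gen xy in auto)
    also have "\<dots> \<longleftrightarrow> inf (bdist x y) p = bot" by (simp add: bdist_inf_eq_bot_iff)
    also have "\<dots> \<longleftrightarrow> inf (bdist (f x) (f y)) p = bot" using iso[OF xy] by simp
    also have "\<dots> \<longleftrightarrow> (\<forall>i. inf (f x i) p = inf (f y i) p)" by (simp add: bdist_inf_eq_bot_iff)
    also have "\<dots> \<longleftrightarrow> pattern p (f x) = pattern p (f y)"
      by (rule pattern_eq_iff[OF _ _ p, symmetric]) (use gen xy in auto)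
    finally show ?thesis .
  qed
  then obtain h where h: "bij_betw h (pattern p ` A) ((\<lambda>x. pattern p (f x)) ` A)"
      and h_pattern: "\<forall>x\<in>A. h (pattern p x) = pattern p (f x)"
    using compatible_labellings_bij[of A "pattern p" "\<lambda>x. pattern p (f x)"] by blast
  have "pattern p ` A \<subseteq> D" and "(\<lambda>x. pattern p (f x)) ` A \<subseteq> D"
    using in_D by auto
  from extend_bij_to_permutation[OF _ this h] obtain \<tau> where "bij \<tau>"
      and "\<forall>\<alpha>. \<tau> \<alpha> \<in> D \<longleftrightarrow> \<alpha> \<in> D" and "\<forall>s\<in>pattern p ` A. \<tau> s = h s"
    by auto
  then show ?thesis using h_pattern by auto
qed

text \<open>On each cell of the subalgebra generated
  by the points involved and the values of g at the corners, the induced map of patterns is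
  extends to a permutation preserving the admissible patterns (those of corners lying in W
  on the cell); the pattern map of these permutations is the required automorphism.\<close>
lemma bdist_preserving_map_extends:
  fixes W A :: "('n::finite \<Rightarrow> 'a::boolean_algebra) set"
  assumes W: "boolean_domain W" and A: "finite A" "A \<subseteq> W" and fA: "f ` A \<subseteq> W"
    and iso: "\<And>x y. x \<in> A \<Longrightarrow> y \<in> A \<Longrightarrow> bdist (f x) (f y) = bdist x y"
  shows "\<exists>F. boolean_isomorphism W W F \<and> (\<forall>x\<in>A. F x = f x)"
proof -
  obtain g where g: "boolean_function g" and W_eq: "W = {x. g x = bot}"
    using W unfolding boolean_domain_def by blast
  define C where "C = (\<lambda>(x, i). x i) ` ((A \<union> f ` A) \<times> UNIV) \<union> range (\<lambda>\<alpha>. g (corner \<alpha>))"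
  obtain cs where cs: "set cs = C"
    using finite_list[of C] A(1) unfolding C_def by auto
  obtain ps where ps: "set ps = cells cs"
    using finite_list[OF cells_finite] by blast
  have gen_points: "x i \<in> set cs" if "x \<in> A \<union> f ` A" for x i
    using that unfolding cs C_def by force
  have gen_corners: "g (corner \<alpha>) \<in> set cs" for \<alpha>
    unfolding cs C_def by blast
  define D where "D p = {\<alpha>. inf (g (corner \<alpha>)) p = bot}" for p
  have pattern_D: "pattern p x \<in> D p" if p: "p \<in> cells cs" and x: "x \<in> A \<union> f ` A" for p x
  proof -
    have "g x = bot" using x A(2) fA unfolding W_eq by auto
    moreover have "inf (g x) p = inf (g (corner (pattern p x))) p"
      by (rule boolean_function_local[OF g]) (rule cell_pattern[OF gen_points[OF x] p])
    ultimately show ?thesis unfolding D_def by simp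
  qed
  define good where "good p \<tau> \<longleftrightarrow> bij \<tau> \<and> (\<forall>\<alpha>. \<tau> \<alpha> \<in> D p \<longleftrightarrow> \<alpha> \<in> D p)
      \<and> (\<forall>x\<in>A. \<tau> (pattern p x) = pattern p (f x))" for p \<tau>
  have "\<exists>\<tau>. good p \<tau>" if p: "p \<in> cells cs" for p
    unfolding good_def
    by (rule pattern_permutation_exists[OF p]) (fact gen_points, fact pattern_D[OF p], fact iso)
  then have "\<forall>p\<in>cells cs. \<exists>\<tau>. good p \<tau>" by blast
  from bchoice[OF this] obtain \<sigma> where \<sigma>: "\<forall>p\<in>cells cs. good p (\<sigma> p)" by blast
  have "boolean_isomorphism W W (pattern_map ps \<sigma>)"
    by (rule pattern_map_isomorphism[OF g W_eq ps gen_corners])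
       (use \<sigma> in \<open>auto simp: good_def D_def\<close>)
  moreover have "pattern_map ps \<sigma> x = f x" if "x \<in> A" for x
    by (rule pattern_map_at[OF ps]) (use that gen_points \<sigma> in \<open>auto simp: good_def\<close>)
  ultimately show ?thesis by blast
qed

theorem mainTheorem3:
  fixes W A A' :: "(('n::finite) \<Rightarrow> 'a::boolean_algebra) set"
    and f :: "('n \<Rightarrow> 'a) \<Rightarrow> ('n \<Rightarrow> 'a)"
  assumes "boolean_domain W"
    and "finite A" and "finite A'" and "A \<subseteq> W" and "A' \<subseteq> W"
    and "bij_betw f A A'"
  shows "(\<exists>F. boolean_isomorphism W W F \<and> (\<forall>x\<in>A. F x = f x)) \<longleftrightarrow>
         (\<forall>x\<in>A. \<forall>y\<in>A. bdist (f x) (f y) = bdist x y)"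
proof
  assume "\<exists>F. boolean_isomorphism W W F \<and> (\<forall>x\<in>A. F x = f x)"
  then obtain F where F: "boolean_isomorphism W W F" and F_f: "\<forall>x\<in>A. F x = f x"
    by blast
  show "\<forall>x\<in>A. \<forall>y\<in>A. bdist (f x) (f y) = bdist x y"
  proof (intro ballI)
    fix x y assume "x \<in> A" and "y \<in> A"
    then have "bdist (F x) (F y) = bdist x y"
      using boolean_isomorphism_preserves_bdist[OF assms(1) F] assms(4) by blast
    then show "bdist (f x) (f y) = bdist x y" using F_f \<open>x \<in> A\<close> \<open>y \<in> A\<close> by simp
  qed
next
  assume "\<forall>x\<in>A. \<forall>y\<in>A. bdist (f x) (f y) = bdist x y"
  moreover have "f ` A \<subseteq> W" using assms(5,6) by (auto simp: bij_betw_def)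
  ultimately show "\<exists>F. boolean_isomorphism W W F \<and> (\<forall>x\<in>A. F x = f x)"
    using bdist_preserving_map_extends[OF assms(1,2,4)] by blast
qed

end
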